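(* For $\phi\in L^\infty$, the operator $V_\phi$ is hyponormal (i.e. $\|V_\phi^*f\|\le\|V_\phi f\|$ for all $f\in H^2$) if and only if $\phi=0$.
   Context: $L^2=L^2(\mathbb{T})$ with orthonormal basis $e_n(z)=z^n$, $n\in\mathbb{Z}$; $H^2$ is the closed span of $\{e_n\}_{n\ge0}$, $P:L^2\to H^2$ the orthogonal projection, $M_\phi$ multiplication by $\phi$. $W:L^2\to L^2$: $We_n=e_{n/2}$ for $n$ even, $0$ for $n$ odd. $K:H^2\to L^2$: $Ke_{2n}=e_n$, $Ke_{2n+1}=e_{-n-1}$ ($n\ge0$). The slant H-Toeplitz operator is $V_\phi=WPM_\phi K:H^2\to H^2$. *)

theory Defs
  imports "HOL-Analysis.Analysis"
begin

text \<open>L^2(T) is identified with l^2(Z) via the orthonormal basis e_n(z) = z^n,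
  i.e. an element of L^2 is represented by its coefficient sequence h :: int => complex.
  H^2 is identified with l^2(N) (coefficients of e_n, n >= 0).
  A symbol phi : T -> C is a function complex => complex evaluated on the unit circle
  via z = cis t, t in [0, 2 pi].\<close>

definition H2 :: "(nat \<Rightarrow> complex) set" where
  "H2 = {c. summable (\<lambda>n. (norm (c n))\<^sup>2)}"

definition H2_norm :: "(nat \<Rightarrow> complex) \<Rightarrow> real" where
  "H2_norm c = sqrt (\<Sum>n. (norm (c n))\<^sup>2)"

definition H2_inner :: "(nat \<Rightarrow> complex) \<Rightarrow> (nat \<Rightarrow> complex) \<Rightarrow> complex" where
  "H2_inner c d = (\<Sum>n. c n * cnj (d n))"

definition Linf :: "(complex \<Rightarrow> complex) \<Rightarrow> bool" where
  "Linf \<phi> \<longleftrightarrow> set_borel_measurable lborel {0..2*pi} (\<lambda>t. \<phi> (cis t)) \<and>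
     (\<exists>C. AE t in lborel. t \<in> {0..2*pi} \<longrightarrow> norm (\<phi> (cis t)) \<le> C)"

definition Linf_zero :: "(complex \<Rightarrow> complex) \<Rightarrow> bool" where
  "Linf_zero \<phi> \<longleftrightarrow> (AE t in lborel. t \<in> {0..2*pi} \<longrightarrow> \<phi> (cis t) = 0)"

definition fourier_coeff :: "(complex \<Rightarrow> complex) \<Rightarrow> int \<Rightarrow> complex" where
  "fourier_coeff \<phi> k =
     (LINT t:{0..2*pi}|lborel. \<phi> (cis t) * cis (- (of_int k * t))) / (2 * pi)"

text \<open>K : H^2 -> L^2,  K e_{2n} = e_n,  K e_{2n+1} = e_{-n-1}.\<close>
definition Kop :: "(nat \<Rightarrow> complex) \<Rightarrow> (int \<Rightarrow> complex)" where
  "Kop c = (\<lambda>m. if m \<ge> 0 then c (2 * nat m) else c (2 * nat (- m - 1) + 1))"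

text \<open>M_phi in the basis e_n: the Laurent matrix (a_{j-m}).\<close>
definition Mop :: "(complex \<Rightarrow> complex) \<Rightarrow> (int \<Rightarrow> complex) \<Rightarrow> (int \<Rightarrow> complex)" where
  "Mop \<phi> g = (\<lambda>j. \<Sum>\<^sub>\<infinity>m. fourier_coeff \<phi> (j - m) * g m)"

text \<open>P : L^2 -> H^2 orthogonal projection (kept inside L^2 here).\<close>
definition Pop :: "(int \<Rightarrow> complex) \<Rightarrow> (int \<Rightarrow> complex)" where
  "Pop h = (\<lambda>j. if j \<ge> 0 then h j else 0)"

text \<open>W : L^2 -> L^2, W e_n = e_{n/2} (n even), 0 (n odd); coefficient of e_k in W h is h_{2k}.\<close>
definition Wop :: "(int \<Rightarrow> complex) \<Rightarrow> (int \<Rightarrow> complex)" where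
  "Wop h = (\<lambda>k. h (2 * k))"

definition Vop :: "(complex \<Rightarrow> complex) \<Rightarrow> (nat \<Rightarrow> complex) \<Rightarrow> (nat \<Rightarrow> complex)" where
  "Vop \<phi> c = (\<lambda>n. Wop (Pop (Mop \<phi> (Kop c))) (int n))"

definition is_adjoint_H2 ::
  "((nat \<Rightarrow> complex) \<Rightarrow> (nat \<Rightarrow> complex)) \<Rightarrow> ((nat \<Rightarrow> complex) \<Rightarrow> (nat \<Rightarrow> complex)) \<Rightarrow> bool" where
  "is_adjoint_H2 A T \<longleftrightarrow> (\<forall>g\<in>H2. T g \<in> H2) \<and>
     (\<forall>f\<in>H2. \<forall>g\<in>H2. H2_inner (A f) g = H2_inner f (T g))"

definition hyponormal_H2 :: "((nat \<Rightarrow> complex) \<Rightarrow> (nat \<Rightarrow> complex)) \<Rightarrow> bool" where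
  "hyponormal_H2 A \<longleftrightarrow> (\<exists>T. is_adjoint_H2 A T \<and> (\<forall>f\<in>H2. H2_norm (T f) \<le> H2_norm (A f)))"

end

theory Submission
  imports Defs
begin

text \<open>Write \<open>a\<close> for the Fourier coefficients of \<open>\<phi>\<close> and \<open>e i\<close> for the standard basis of
  \<open>H\<^sup>2\<close>. Since \<open>K (e i) = e (\<iota> i)\<close> for a bijection \<open>\<iota>\<close> from \<open>\<nat>\<close> onto \<open>\<int>\<close>, the matrix entry
  of \<open>V\<^sub>\<phi>\<close> in row \<open>k\<close> and column \<open>i\<close> is \<open>a (2k - \<iota> i)\<close>. So the coordinates of
  \<open>V\<^sub>\<phi>\<^sup>* (e k)\<close> are the numbers \<open>cnj (a j)\<close>, each \<open>j \<in> \<int>\<close> occurring exactly once, whereas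
  \<open>V\<^sub>\<phi> (e (2p + 1))\<close> only involves the \<open>a j\<close> with \<open>j > p\<close>. Hyponormality at \<open>e (2p + 1)\<close>
  therefore forces \<open>a j = 0\<close> for all \<open>j \<le> p\<close>; as \<open>p\<close> is arbitrary, all Fourier coefficients
  vanish.

  Then \<open>\<phi> = 0\<close> almost everywhere by the uniqueness theorem for Fourier coefficients:
  \<open>\<phi>\<close> is orthogonal to all trigonometric polynomials, hence by Stone-Weierstrass to all
  continuous functions on the circle, hence by dominated convergence its integral over every
  arc vanishes, and so it vanishes at all of its Lebesgue points.\<close>

section \<open>Fourier uniqueness\<close>

lemma Linf_set_integrable:
  assumes "Linf \<phi>"
  shows "set_integrable lborel {0..2*pi} (\<lambda>t. \<phi> (cis t))"
proof -
  from assms obtain C where meas: "set_borel_measurable lborel {0..2*pi} (\<lambda>t. \<phi> (cis t))"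
    and bound: "AE t in lborel. t \<in> {0..2*pi} \<longrightarrow> norm (\<phi> (cis t)) \<le> C"
    unfolding Linf_def by blast
  have "set_integrable lborel {0..2*pi} (\<lambda>_. complex_of_real C)"
    unfolding set_integrable_def
    by (intro integrable_scaleR_left integrable_real_indicator) (auto simp: emeasure_lborel_Icc)
  then show ?thesis
    by (rule set_integrable_bound[OF _ meas]) (use bound in \<open>auto elim: AE_mp\<close>)
qed

lemma set_integrable_mult_bounded:
  fixes f h :: "'a \<Rightarrow> complex"
  assumes f: "set_integrable M S f" and h: "h \<in> borel_measurable M"
    and bound: "\<And>x. x \<in> S \<Longrightarrow> norm (h x) \<le> B"
  shows "set_integrable M S (\<lambda>x. f x * h x)"
proof (rule set_integrable_bound)
  show "set_integrable M S (\<lambda>x. complex_of_real B * f x)"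
    using f by blast
  have "(\<lambda>x. (indicator S x *\<^sub>R f x) * h x) \<in> borel_measurable M"
    using borel_measurable_integrable[OF f[unfolded set_integrable_def]] h by measurable
  then show "set_borel_measurable M S (\<lambda>x. f x * h x)"
    by (simp add: set_borel_measurable_def)
  show "AE x in M. x \<in> S \<longrightarrow> norm (f x * h x) \<le> norm (complex_of_real B * f x)"
  proof (intro AE_I2 impI)
    fix x assume "x \<in> S"
    then have "norm (f x) * norm (h x) \<le> norm (f x) * \<bar>B\<bar>"
      using bound by (intro mult_left_mono) force+
    then show "norm (f x * h x) \<le> norm (complex_of_real B * f x)"
      by (simp add: norm_mult mult.commute)
  qed
qed

lemma Linf_set_integrable_mult:
  assumes "Linf \<phi>" "h \<in> borel_measurable lborel" "\<And>t. norm (h t) \<le> B"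
  shows "set_integrable lborel {0..2*pi} (\<lambda>t. \<phi> (cis t) * h t)"
  using set_integrable_mult_bounded[OF Linf_set_integrable[OF assms(1)] assms(2)] assms(3)
  by blast

inductive trig_poly :: "(real \<Rightarrow> complex) \<Rightarrow> bool" where
  trig_poly_monomial: "trig_poly (\<lambda>t. c * cis (of_int k * t))"
| trig_poly_add: "trig_poly P \<Longrightarrow> trig_poly Q \<Longrightarrow> trig_poly (\<lambda>t. P t + Q t)"

lemma trig_poly_const: "trig_poly (\<lambda>t. c)"
  using trig_poly_monomial[of c 0] by simp

lemma trig_poly_mult: "trig_poly P \<Longrightarrow> trig_poly Q \<Longrightarrow> trig_poly (\<lambda>t. P t * Q t)"
proof (induction P rule: trig_poly.induct)
  case (trig_poly_monomial c k)
  from trig_poly_monomial.prems show ?case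
  proof (induction Q rule: trig_poly.induct)
    case (trig_poly_monomial d l)
    have "(\<lambda>t. c * cis (of_int k * t) * (d * cis (of_int l * t)))
        = (\<lambda>t. (c * d) * cis (of_int (k + l) * t))"
      by (rule ext) (simp add: cis_mult[symmetric] algebra_simps)
    then show ?case
      by (metis trig_poly.trig_poly_monomial)
  next
    case (trig_poly_add P Q)
    then show ?case
      using trig_poly.trig_poly_add[OF trig_poly_add.IH] by (simp add: distrib_left)
  qed
next
  case (trig_poly_add P1 P2)
  then show ?case
    using trig_poly.trig_poly_add[OF trig_poly_add.IH] by (simp add: distrib_right)
qed

lemma trig_poly_continuous: "trig_poly P \<Longrightarrow> continuous_on UNIV P"
  by (induction P rule: trig_poly.induct) (auto intro!: continuous_intros)

lemma trig_poly_bounded: "trig_poly P \<Longrightarrow> \<exists>B. \<forall>t. norm (P t) \<le> B"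
proof (induction P rule: trig_poly.induct)
  case (trig_poly_monomial c k)
  then show ?case
    by (auto simp: norm_mult)
next
  case (trig_poly_add P Q)
  then obtain B1 B2 where "\<forall>t. norm (P t) \<le> B1" "\<forall>t. norm (Q t) \<le> B2"
    by blast
  then have "\<forall>t. norm (P t + Q t) \<le> B1 + B2"
    by (metis norm_triangle_le add_mono)
  then show ?case
    by blast
qed

lemma trig_poly_cos: "trig_poly (\<lambda>t. complex_of_real (cos t))"
proof -
  have "trig_poly (\<lambda>t. (1/2) * cis (of_int 1 * t) + (1/2) * cis (of_int (-1) * t))"
    by (intro trig_poly_add trig_poly_monomial)
  moreover have "(\<lambda>t. (1/2) * cis (of_int 1 * t) + (1/2) * cis (of_int (-1) * t))
      = (\<lambda>t. complex_of_real (cos t))"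
    by (rule ext) (simp add: complex_eq_iff)
  ultimately show ?thesis
    by simp
qed

lemma trig_poly_sin: "trig_poly (\<lambda>t. complex_of_real (sin t))"
proof -
  have "trig_poly (\<lambda>t. (- \<i>/2) * cis (of_int 1 * t) + (\<i>/2) * cis (of_int (-1) * t))"
    by (intro trig_poly_add trig_poly_monomial)
  moreover have "(\<lambda>t. (- \<i>/2) * cis (of_int 1 * t) + (\<i>/2) * cis (of_int (-1) * t))
      = (\<lambda>t. complex_of_real (sin t))"
    by (rule ext) (simp add: complex_eq_iff)
  ultimately show ?thesis
    by simp
qed

lemma trig_poly_real_polynomial_function:
  "real_polynomial_function G \<Longrightarrow> trig_poly (\<lambda>t. complex_of_real (G (cis t)))"
proof (induction G rule: real_polynomial_function.induct)
  case (linear G)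
  have linear_expansion: "G z = Re z * G 1 + Im z * G \<i>" for z
  proof -
    have "z = Re z *\<^sub>R 1 + Im z *\<^sub>R \<i>"
      by (simp add: complex_eq_iff)
    then have "G z = G (Re z *\<^sub>R 1 + Im z *\<^sub>R \<i>)"
      by simp
    also have "\<dots> = Re z *\<^sub>R G 1 + Im z *\<^sub>R G \<i>"
      using linear.hyps by (simp add: linear_simps)
    finally show ?thesis
      by simp
  qed
  have "(\<lambda>t. complex_of_real (G (cis t)))
      = (\<lambda>t. of_real (G 1) * of_real (cos t) + of_real (G \<i>) * of_real (sin t))"
    by (rule ext, subst linear_expansion) (simp add: mult.commute)
  moreover have "trig_poly (\<lambda>t. of_real (G 1) * of_real (cos t) + of_real (G \<i>) * of_real (sin t))"
    by (intro trig_poly_add trig_poly_mult trig_poly_const trig_poly_cos trig_poly_sin)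
  ultimately show ?case
    by simp
next
  case (const c)
  then show ?case
    using trig_poly_const by simp
next
  case (add f g)
  then show ?case
    using trig_poly_add by fastforce
next
  case (mult f g)
  then show ?case
    using trig_poly_mult by fastforce
qed

lemma Linf_set_integrable_mult_trig_poly:
  assumes "Linf \<phi>" "trig_poly P"
  shows "set_integrable lborel {0..2*pi} (\<lambda>t. \<phi> (cis t) * P t)"
proof -
  obtain B where "\<forall>t. norm (P t) \<le> B"
    using trig_poly_bounded[OF assms(2)] by blast
  moreover have "P \<in> borel_measurable lborel"
    using borel_measurable_continuous_onI[OF trig_poly_continuous[OF assms(2)]] by simp
  ultimately show ?thesis
    using Linf_set_integrable_mult[OF assms(1)] by blast
qed

lemma set_integral_mult_trig_poly_eq_0:
  assumes L: "Linf \<phi>" and coeff: "\<And>k. fourier_coeff \<phi> k = 0" and P: "trig_poly P"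
  shows "(LINT t:{0..2*pi}|lborel. \<phi> (cis t) * P t) = 0"
  using P
proof (induction P rule: trig_poly.induct)
  case (trig_poly_monomial c k)
  have "(LINT t:{0..2*pi}|lborel. \<phi> (cis t) * cis (- (of_int (- k) * t))) = 0"
    using coeff[of "- k"] unfolding fourier_coeff_def by simp
  then show ?case
    by (simp add: mult.left_commute)
next
  case (trig_poly_add P Q)
  have "(LINT t:{0..2*pi}|lborel. \<phi> (cis t) * (P t + Q t))
      = (LINT t:{0..2*pi}|lborel. \<phi> (cis t) * P t + \<phi> (cis t) * Q t)"
    by (simp add: distrib_left)
  also have "\<dots> = 0"
    using set_integral_add(2)[OF Linf_set_integrable_mult_trig_poly[OF L trig_poly_add.hyps(1)]
        Linf_set_integrable_mult_trig_poly[OF L trig_poly_add.hyps(2)]] trig_poly_add.IH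
    by simp
  finally show ?case .
qed

lemma Linf_set_integrable_mult_continuous:
  fixes G :: "complex \<Rightarrow> real"
  assumes "Linf \<phi>" "continuous_on (sphere 0 1) G"
  shows "set_integrable lborel {0..2*pi} (\<lambda>t. \<phi> (cis t) * complex_of_real (G (cis t)))"
proof -
  have "continuous_on UNIV (\<lambda>t. complex_of_real (G (cis t)))"
    by (intro continuous_on_of_real continuous_on_compose2[OF assms(2)])
      (auto intro!: continuous_intros)
  then have "(\<lambda>t. complex_of_real (G (cis t))) \<in> borel_measurable lborel"
    using borel_measurable_continuous_onI[of "\<lambda>t. complex_of_real (G (cis t))"] by simp
  moreover have "bounded (G ` sphere 0 1)"
    by (intro compact_imp_bounded compact_continuous_image[OF assms(2)] compact_sphere)
  then obtain B where "\<And>z. z \<in> sphere 0 1 \<Longrightarrow> norm (G z) \<le> B"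
    unfolding bounded_iff by blast
  then have "norm (complex_of_real (G (cis t))) \<le> B" for t
    by simp
  ultimately show ?thesis
    using Linf_set_integrable_mult[OF assms(1)] by blast
qed

lemma norm_set_integral_mult_real_le:
  fixes f :: "'a \<Rightarrow> complex" and g :: "'a \<Rightarrow> real"
  assumes f: "set_integrable M S f" and fg: "set_integrable M S (\<lambda>x. f x * of_real (g x))"
    and g: "\<And>x. x \<in> S \<Longrightarrow> \<bar>g x\<bar> \<le> \<delta>"
  shows "norm (LINT x:S|M. f x * of_real (g x)) \<le> \<delta> * (LINT x:S|M. norm (f x))"
proof -
  have "norm (LINT x:S|M. f x * of_real (g x)) \<le> (LINT x:S|M. norm (f x * of_real (g x)))"
    by (rule set_integral_norm_bound[OF fg])
  also have "\<dots> \<le> (LINT x:S|M. \<delta> * norm (f x))"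
  proof (rule set_integral_mono)
    show "norm (f x * of_real (g x)) \<le> \<delta> * norm (f x)" if "x \<in> S" for x
      using mult_right_mono[OF g[OF that], of "norm (f x)"] by (simp add: norm_mult mult.commute)
  qed (use set_integrable_norm[OF fg] set_integrable_norm[OF f] in auto)
  also have "\<dots> = \<delta> * (LINT x:S|M. norm (f x))"
    by simp
  finally show ?thesis .
qed

text \<open>Approximate \<open>G\<close> uniformly on the circle by a polynomial in \<open>Re z\<close> and \<open>Im z\<close>,
  which is a trigonometric polynomial in \<open>t\<close>.\<close>

lemma set_integral_mult_continuous_eq_0:
  fixes G :: "complex \<Rightarrow> real"
  assumes L: "Linf \<phi>" and coeff: "\<And>k. fourier_coeff \<phi> k = 0"
    and G: "continuous_on (sphere 0 1) G"
  shows "(LINT t:{0..2*pi}|lborel. \<phi> (cis t) * complex_of_real (G (cis t))) = 0"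
proof -
  define I where "I = (LINT t:{0..2*pi}|lborel. \<phi> (cis t) * complex_of_real (G (cis t)))"
  define M where "M = (LINT t:{0..2*pi}|lborel. norm (\<phi> (cis t)))"
  have M: "M \<ge> 0"
    unfolding M_def set_lebesgue_integral_def by (rule integral_nonneg_AE) auto
  have "norm I \<le> e" if "e > 0" for e
  proof -
    define \<delta> where "\<delta> = e / (M + 1)"
    have \<delta>: "\<delta> > 0" "\<delta> * M \<le> e"
      using M \<open>e > 0\<close> by (auto simp: \<delta>_def field_simps)
    obtain Q where Q: "real_polynomial_function Q"
      and GQ: "\<And>z. z \<in> sphere 0 1 \<Longrightarrow> \<bar>G z - Q z\<bar> < \<delta>"
      using Stone_Weierstrass_real_polynomial_function[OF compact_sphere G \<delta>(1)] by blast
    have tQ: "trig_poly (\<lambda>t. complex_of_real (Q (cis t)))"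
      by (rule trig_poly_real_polynomial_function[OF Q])
    have Gi: "set_integrable lborel {0..2*pi} (\<lambda>t. \<phi> (cis t) * complex_of_real (G (cis t)))"
      by (rule Linf_set_integrable_mult_continuous[OF L G])
    have Qi: "set_integrable lborel {0..2*pi} (\<lambda>t. \<phi> (cis t) * complex_of_real (Q (cis t)))"
      by (rule Linf_set_integrable_mult_trig_poly[OF L tQ])
    have "I = (LINT t:{0..2*pi}|lborel. \<phi> (cis t) * of_real (G (cis t) - Q (cis t)))"
      using set_integral_diff(2)[OF Gi Qi] set_integral_mult_trig_poly_eq_0[OF L coeff tQ]
      by (simp add: I_def right_diff_distrib)
    also have "norm \<dots> \<le> \<delta> * M"
      unfolding M_def
    proof (rule norm_set_integral_mult_real_le[OF Linf_set_integrable[OF L]])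
      show "set_integrable lborel {0..2*pi} (\<lambda>t. \<phi> (cis t) * of_real (G (cis t) - Q (cis t)))"
        using set_integral_diff(1)[OF Gi Qi] by (simp add: right_diff_distrib)
      show "\<bar>G (cis t) - Q (cis t)\<bar> \<le> \<delta>" for t
        using GQ[of "cis t"] by simp
    qed
    finally show ?thesis
      using \<delta>(2) by linarith
  qed
  then have "norm I \<le> 0"
    using field_le_epsilon[of "norm I" 0] by simp
  then show ?thesis
    by (simp add: I_def)
qed

lemma cis_in_arc_iff:
  assumes "0 < \<alpha>" "\<beta> < 2*pi" "0 \<le> t" "t \<le> 2*pi"
  shows "cis t \<in> cis ` {\<alpha>..\<beta>} \<longleftrightarrow> t \<in> {\<alpha>..\<beta>}"
proof
  assume "cis t \<in> cis ` {\<alpha>..\<beta>}"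
  then obtain s where s: "s \<in> {\<alpha>..\<beta>}" "cis t = cis s"
    by blast
  then have "cis (t - s) = 1"
    by (simp add: cis_divide[symmetric])
  then have "cos (t - s) = 1"
    by (metis cis.sel(1) one_complex.sel(1))
  then obtain n :: int where n: "t - s = of_int n * 2 * pi"
    using cos_one_2pi_int by blast
  have "- 1 < (t - s) / (2 * pi)" "(t - s) / (2 * pi) < 1"
    using s assms by (simp_all add: divide_less_eq less_divide_eq)
  moreover have "(t - s) / (2 * pi) = of_int n"
    using n by simp
  ultimately have "n = 0"
    by linarith
  then show "t \<in> {\<alpha>..\<beta>}"
    using n s by simp
qed simp

lemma continuous_approx_arc_indicator:
  assumes "0 < \<alpha>" "\<alpha> \<le> \<beta>" "\<beta> < 2*pi"
  obtains G :: "nat \<Rightarrow> complex \<Rightarrow> real"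
  where "\<And>n. continuous_on (sphere 0 1) (G n)" "\<And>n z. \<bar>G n z\<bar> \<le> 1"
    and "\<And>t. t \<in> {0..2*pi} \<Longrightarrow> (\<lambda>n. G n (cis t)) \<longlonglongrightarrow> indicator {\<alpha>..\<beta>} t"
proof
  define K where "K = cis ` {\<alpha>..\<beta>}"
  have "compact K"
    unfolding K_def by (intro compact_continuous_image) (auto intro!: continuous_intros)
  then have K: "closed K" "K \<noteq> {}"
    using assms by (auto simp: K_def compact_imp_closed)
  define G where "G n z = max 0 (1 - real n * infdist z K)" for n z
  show "continuous_on (sphere 0 1) (G n)" for n
    unfolding G_def by (intro continuous_intros)
  show "\<bar>G n z\<bar> \<le> 1" for n z
    using infdist_nonneg[of z K] by (auto simp: G_def)
  fix t :: real assume "t \<in> {0..2*pi}"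
  then have K_iff: "cis t \<in> K \<longleftrightarrow> t \<in> {\<alpha>..\<beta>}"
    unfolding K_def using cis_in_arc_iff assms by auto
  show "(\<lambda>n. G n (cis t)) \<longlonglongrightarrow> indicator {\<alpha>..\<beta>} t"
  proof (cases "cis t \<in> K")
    case True
    then show ?thesis
      using K_iff by (simp add: G_def)
  next
    case False
    then have d: "infdist (cis t) K > 0"
      using in_closed_iff_infdist_zero[OF K] infdist_nonneg[of "cis t" K] by auto
    obtain N :: nat where N: "N > 1 / infdist (cis t) K"
      using reals_Archimedean2 by blast
    have "G n (cis t) = 0" if "n \<ge> N" for n
    proof -
      have "1 < real N * infdist (cis t) K"
        using N d by (simp add: field_simps)
      also have "\<dots> \<le> real n * infdist (cis t) K"
        using d that by (intro mult_right_mono) auto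
      finally show ?thesis
        by (simp add: G_def)
    qed
    then have "eventually (\<lambda>n. G n (cis t) = indicator {\<alpha>..\<beta>} t) sequentially"
      using False K_iff by (auto simp: eventually_sequentially)
    then show ?thesis
      by (rule tendsto_eventually)
  qed
qed

lemma tendsto_set_integral_mult_indicator:
  fixes f :: "'a \<Rightarrow> complex" and G :: "nat \<Rightarrow> 'a \<Rightarrow> real"
  assumes f: "set_integrable M S f" and A: "A \<in> sets M" "A \<subseteq> S"
    and fG: "\<And>n. set_integrable M S (\<lambda>x. f x * of_real (G n x))"
    and bound: "\<And>n x. \<bar>G n x\<bar> \<le> 1"
    and lim: "\<And>x. x \<in> S \<Longrightarrow> (\<lambda>n. G n x) \<longlonglongrightarrow> indicator A x"
  shows "(\<lambda>n. LINT x:S|M. f x * of_real (G n x)) \<longlonglongrightarrow> (LINT x:A|M. f x)"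
proof -
  define s where "s = (\<lambda>n x. indicator S x *\<^sub>R (f x * of_real (G n x)))"
  define F where "F = (\<lambda>x. indicator A x *\<^sub>R f x)"
  have "set_integrable M A f"
    by (rule set_integrable_subset[OF f A])
  then have F: "F \<in> borel_measurable M"
    unfolding F_def set_integrable_def by (rule borel_measurable_integrable)
  have s: "s n \<in> borel_measurable M" for n
    using fG[of n] unfolding s_def set_integrable_def by (rule borel_measurable_integrable)
  have "(\<lambda>n. integral\<^sup>L M (s n)) \<longlonglongrightarrow> integral\<^sup>L M F"
  proof (rule integral_dominated_convergence[OF F s])
    show "integrable M (\<lambda>x. norm (indicator S x *\<^sub>R f x))"
      using f unfolding set_integrable_def by (rule integrable_norm)
    show "AE x in M. norm (s n x) \<le> norm (indicator S x *\<^sub>R f x)" for n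
    proof (intro AE_I2)
      fix x
      have "norm (s n x) = norm (indicator S x *\<^sub>R f x) * \<bar>G n x\<bar>"
        by (simp add: s_def norm_mult)
      also have "\<dots> \<le> norm (indicator S x *\<^sub>R f x)"
        using bound[of n x] by (intro mult_left_le) auto
      finally show "norm (s n x) \<le> norm (indicator S x *\<^sub>R f x)" .
    qed
    have "(\<lambda>n. s n x) \<longlonglongrightarrow> F x" for x
    proof (cases "x \<in> S")
      case True
      have "(\<lambda>n. f x * of_real (G n x)) \<longlonglongrightarrow> f x * of_real (indicator A x)"
        using True by (intro tendsto_intros lim)
      then show ?thesis
        using True by (simp add: s_def F_def scaleR_conv_of_real mult.commute)
    next
      case False
      then have "x \<notin> A"
        using A(2) by blast
      then show ?thesis
        using False by (simp add: s_def F_def)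
    qed
    then show "AE x in M. (\<lambda>n. s n x) \<longlonglongrightarrow> F x"
      by simp
  qed
  then show ?thesis
    by (simp add: s_def F_def set_lebesgue_integral_def)
qed

lemma set_integral_arc_eq_0:
  assumes L: "Linf \<phi>" and coeff: "\<And>k. fourier_coeff \<phi> k = 0"
    and arc: "0 < \<alpha>" "\<alpha> \<le> \<beta>" "\<beta> < 2*pi"
  shows "(LINT t:{\<alpha>..\<beta>}|lborel. \<phi> (cis t)) = 0"
proof -
  obtain G :: "nat \<Rightarrow> complex \<Rightarrow> real"
    where G: "\<And>n. continuous_on (sphere 0 1) (G n)" "\<And>n z. \<bar>G n z\<bar> \<le> 1"
    and G_lim: "\<And>t. t \<in> {0..2*pi} \<Longrightarrow> (\<lambda>n. G n (cis t)) \<longlonglongrightarrow> indicator {\<alpha>..\<beta>} t"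
    using continuous_approx_arc_indicator[OF arc] by blast
  have "(\<lambda>n. LINT t:{0..2*pi}|lborel. \<phi> (cis t) * of_real (G n (cis t)))
      \<longlonglongrightarrow> (LINT t:{\<alpha>..\<beta>}|lborel. \<phi> (cis t))"
    using arc
    by (intro tendsto_set_integral_mult_indicator Linf_set_integrable[OF L]
        Linf_set_integrable_mult_continuous[OF L G(1)] G(2) G_lim) auto
  then show ?thesis
    by (simp add: set_integral_mult_continuous_eq_0[OF L coeff G(1)] LIMSEQ_const_iff)
qed

text \<open>Every point of \<open>(a, b)\<close> outside the null set of non-Lebesgue points is a limit of
  averages of \<open>f\<close> over intervals \<open>[x, x + h]\<close>, all of which vanish.\<close>

lemma AE_eq_0_if_interval_integrals_eq_0:
  fixes f :: "real \<Rightarrow> complex"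
  assumes f: "set_integrable lborel {a..b} f"
    and zero: "\<And>x y. a < x \<Longrightarrow> x \<le> y \<Longrightarrow> y < b \<Longrightarrow> (LINT t:{x..y}|lborel. f t) = 0"
  shows "AE t in lborel. t \<in> {a..b} \<longrightarrow> f t = 0"
proof -
  define g where "g t = indicator {a..b} t *\<^sub>R f t" for t
  have "g integrable_on UNIV"
    using integrable_on_lborel f unfolding set_integrable_def g_def by blast
  then have "g integrable_on cbox x y" for x y :: real
    by (rule integrable_on_subcbox) simp
  then obtain N where N: "negligible N"
    and lebesgue_point: "\<And>x e. \<lbrakk>x \<notin> N; 0 < e\<rbrakk> \<Longrightarrow>
      \<exists>d>0. \<forall>h. 0 < h \<and> h < d \<longrightarrow>
        norm (integral (cbox x (x + h *\<^sub>R One)) g /\<^sub>R h ^ DIM(real) - g x) < e"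
    using integrable_ccontinuous_explicit[of g] by blast
  have "f x = 0" if x: "a < x" "x < b" "x \<notin> N" for x
  proof -
    have "norm (f x) < e" if "e > 0" for e
    proof -
      obtain d where "d > 0" and d: "\<And>h. 0 < h \<and> h < d \<Longrightarrow>
          norm (integral (cbox x (x + h *\<^sub>R One)) g /\<^sub>R h ^ DIM(real) - g x) < e"
        using lebesgue_point[OF x(3) \<open>e > 0\<close>] by blast
      define h where "h = min (d/2) ((b - x)/2)"
      have h: "0 < h" "h < d" "x + h < b"
        using \<open>d > 0\<close> x by (auto simp: h_def min_def field_simps)
      have sub: "{x..x+h} \<subseteq> {a..b}"
        using x h by auto
      have "integral {x..x+h} g = integral {x..x+h} f"
        using sub by (intro integral_cong) (auto simp: g_def)
      also have "\<dots> = (LINT t:{x..x+h}|lborel. f t)"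
        using set_integrable_subset[OF f _ sub]
        by (intro set_borel_integral_eq_integral(2)[symmetric]) auto
      also have "\<dots> = 0"
        using x h by (intro zero) auto
      finally show ?thesis
        using d[of h] h x by (simp add: g_def)
    qed
    then show ?thesis
      by (metis norm_le_zero_iff order_less_irrefl not_le)
  qed
  then have "AE t in lebesgue. t \<in> {a..b} \<longrightarrow> f t = 0"
    unfolding eventually_ae_filter_negligible
    by (intro exI[of _ "N \<union> {a, b}"]) (use N in force)
  then show ?thesis
    by (simp add: AE_completion_iff)
qed

lemma Linf_zero_if_fourier_coeff_eq_0:
  assumes "Linf \<phi>" "\<And>k. fourier_coeff \<phi> k = 0"
  shows "Linf_zero \<phi>"
  unfolding Linf_zero_def
  by (rule AE_eq_0_if_interval_integrals_eq_0[OF Linf_set_integrable[OF assms(1)]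
        set_integral_arc_eq_0[OF assms]])

lemma fourier_coeff_eq_0_if_Linf_zero:
  assumes "Linf_zero \<phi>"
  shows "fourier_coeff \<phi> k = 0"
proof -
  have "AE t in lborel. indicator {0..2*pi} t *\<^sub>R (\<phi> (cis t) * cis (- (of_int k * t))) = 0"
    using assms unfolding Linf_zero_def by eventually_elim (auto simp: indicator_def)
  then have "(LINT t:{0..2*pi}|lborel. \<phi> (cis t) * cis (- (of_int k * t))) = 0"
    unfolding set_lebesgue_integral_def by (rule integral_eq_zero_AE)
  then show ?thesis
    by (simp add: fourier_coeff_def)
qed

section \<open>The matrix of the slant H-Toeplitz operator\<close>

definition K_index :: "nat \<Rightarrow> int" where
  "K_index i = (if even i then int (i div 2) else - int (i div 2) - 1)"

lemma bij_K_index: "bij K_index"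
  by (rule bij_betw_byWitness[where f' = "\<lambda>z. if z \<ge> 0 then 2 * nat z else 2 * nat (- z - 1) + 1"])
    (auto simp: K_index_def)

definition H2_basis :: "nat \<Rightarrow> nat \<Rightarrow> complex" where
  "H2_basis i = (\<lambda>n. if n = i then 1 else 0)"

lemma H2_basis_in_H2: "H2_basis i \<in> H2"
proof -
  have "(\<lambda>n. (norm (H2_basis i n))\<^sup>2) = (\<lambda>n. if n = i then 1 else 0)"
    by (auto simp: H2_basis_def)
  then show ?thesis
    unfolding H2_def using sums_single[of i "\<lambda>_. 1::real"] by (auto simp: sums_iff)
qed

lemma H2_inner_basis_right: "H2_inner c (H2_basis k) = c k"
proof -
  have "(\<lambda>n. c n * cnj (H2_basis k n)) = (\<lambda>n. if n = k then c n else 0)"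
    by (auto simp: H2_basis_def)
  then show ?thesis
    unfolding H2_inner_def using sums_single[of k c] sums_unique by metis
qed

lemma H2_inner_basis_left: "H2_inner (H2_basis i) d = cnj (d i)"
proof -
  have "(\<lambda>n. H2_basis i n * cnj (d n)) = (\<lambda>n. if n = i then cnj (d n) else 0)"
    by (auto simp: H2_basis_def)
  then show ?thesis
    unfolding H2_inner_def using sums_single[of i "\<lambda>n. cnj (d n)"] sums_unique by metis
qed

lemma adjoint_H2_basis:
  assumes "is_adjoint_H2 A T"
  shows "T (H2_basis k) i = cnj (A (H2_basis i) k)"
proof -
  have "A (H2_basis i) k = cnj (T (H2_basis k) i)"
    using assms H2_basis_in_H2
    by (metis is_adjoint_H2_def H2_inner_basis_left H2_inner_basis_right)
  then show ?thesis
    by simp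
qed

lemma Kop_H2_basis: "Kop (H2_basis i) = (\<lambda>m. if m = K_index i then 1 else 0)"
  by (rule ext) (auto simp: Kop_def H2_basis_def K_index_def)

lemma Vop_H2_basis: "Vop \<phi> (H2_basis i) k = fourier_coeff \<phi> (2 * int k - K_index i)"
proof -
  have "Vop \<phi> (H2_basis i) k
      = (\<Sum>\<^sub>\<infinity>m. fourier_coeff \<phi> (2 * int k - m) * (if m = K_index i then 1 else 0))"
    by (simp add: Vop_def Wop_def Pop_def Mop_def Kop_H2_basis)
  also have "\<dots> = (\<Sum>\<^sub>\<infinity>m\<in>{K_index i}. fourier_coeff \<phi> (2 * int k - m) * (if m = K_index i then 1 else 0))"
    by (rule infsum_cong_neutral) auto
  finally show ?thesis
    by simp
qed

section \<open>Hyponormality forces the Fourier coefficients to vanish\<close>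

lemma summable_reindex_nonneg_iff:
  fixes g :: "'a \<Rightarrow> real"
  assumes "inj h" "\<And>x. g x \<ge> 0"
  shows "summable (\<lambda>n. g (h n)) \<longleftrightarrow> g summable_on range h"
  using summable_on_reindex[OF assms(1), of g] summable_on_UNIV_nonneg_real_iff[of "g \<circ> h"] assms(2)
  by (simp add: o_def)

lemma suminf_reindex_nonneg_eq_infsum:
  fixes g :: "'a \<Rightarrow> real"
  assumes "inj h" "\<And>x. g x \<ge> 0" "summable (\<lambda>n. g (h n))"
  shows "(\<Sum>n. g (h n)) = infsum g (range h)"
proof -
  have "((g \<circ> h) has_sum (\<Sum>n. g (h n))) UNIV"
    using sums_nonneg_imp_has_sum[OF summable_sums[OF assms(3)]] assms(2) by (simp add: o_def)
  then show ?thesis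
    using has_sum_reindex[OF assms(1)] by (metis infsumI)
qed

lemma infsum_le_subset_imp_eq_0:
  fixes g :: "'a \<Rightarrow> real"
  assumes "\<And>x. g x \<ge> 0" "g summable_on UNIV" "infsum g UNIV \<le> infsum g B" "x \<notin> B"
  shows "g x = 0"
proof -
  have gB: "g summable_on B" and gB': "g summable_on - B"
    using summable_on_subset[OF assms(2)] by auto
  have "infsum g {x} \<le> infsum g (- B)"
    by (rule infsum_mono_neutral) (use gB' assms in auto)
  moreover have "infsum g UNIV = infsum g B + infsum g (- B)"
    using infsum_Un_disjoint[OF gB gB'] by (simp add: Un_commute)
  ultimately show ?thesis
    using assms(1)[of x] assms(3) by simp
qed

lemma fourier_coeff_eq_0_if_hyponormal:
  assumes "hyponormal_H2 (Vop \<phi>)"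
  shows "fourier_coeff \<phi> j = 0"
proof -
  obtain T where adj: "is_adjoint_H2 (Vop \<phi>) T"
    and hyp: "\<And>f. f \<in> H2 \<Longrightarrow> H2_norm (T f) \<le> H2_norm (Vop \<phi> f)"
    using assms unfolding hyponormal_H2_def by blast
  define g where "g m = (cmod (fourier_coeff \<phi> m))\<^sup>2" for m
  define p where "p = nat j"
  define k where "k = 2 * p + 1"
  define row where "row i = 2 * int k - K_index i" for i
  define column where "column n = 2 * int n + int p + 1" for n
  have g: "g x \<ge> 0" for x
    by (simp add: g_def)
  have "bij row"
    using bij_comp[OF bij_K_index, of "\<lambda>z. 2 * int k - z"]
    by (simp add: row_def o_def bij_def inj_def surj_def)
  then have row: "inj row" "range row = UNIV"
    by (auto simp: bij_def)
  have column: "inj column"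
    by (rule injI) (simp add: column_def)
  have "T (H2_basis k) \<in> H2"
    using adj H2_basis_in_H2 unfolding is_adjoint_H2_def by blast
  then have "summable (\<lambda>i. g (row i))"
    by (simp add: H2_def g_def row_def adjoint_H2_basis[OF adj] Vop_H2_basis)
  then have sum_row: "g summable_on UNIV" "(\<Sum>i. g (row i)) = infsum g UNIV"
    using summable_reindex_nonneg_iff[of row g, OF row(1) g]
      suminf_reindex_nonneg_eq_infsum[of row g, OF row(1) g]
    by (simp_all add: row(2))
  then have "summable (\<lambda>n. g (column n))"
    using summable_reindex_nonneg_iff[of column g, OF column g] summable_on_subset by blast
  then have sum_column: "(\<Sum>n. g (column n)) = infsum g (range column)"
    by (rule suminf_reindex_nonneg_eq_infsum[of column g, OF column g])
  have K_index_k: "K_index k = - int p - 1"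
    by (simp add: K_index_def k_def)
  have "sqrt (\<Sum>i. g (row i)) \<le> sqrt (\<Sum>n. g (column n))"
    using hyp[OF H2_basis_in_H2, of k]
    by (simp add: H2_norm_def g_def row_def column_def adjoint_H2_basis[OF adj] Vop_H2_basis
        K_index_k algebra_simps)
  then have "infsum g UNIV \<le> infsum g (range column)"
    using sum_row(2) sum_column by simp
  moreover have "j \<notin> range column"
    by (auto simp: column_def p_def)
  ultimately have "g j = 0"
    using infsum_le_subset_imp_eq_0[OF g sum_row(1)] by blast
  then show ?thesis
    by (simp add: g_def)
qed

theorem mainTheorem8:
  fixes \<phi> :: "complex \<Rightarrow> complex"
  assumes "Linf \<phi>"
  shows "hyponormal_H2 (Vop \<phi>) \<longleftrightarrow> Linf_zero \<phi>"
proof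
  assume "hyponormal_H2 (Vop \<phi>)"
  then show "Linf_zero \<phi>"
    using Linf_zero_if_fourier_coeff_eq_0[OF assms] fourier_coeff_eq_0_if_hyponormal by blast
next
  assume "Linf_zero \<phi>"
  then have "Vop \<phi> c = (\<lambda>n. 0)" for c
    by (simp add: Vop_def Wop_def Pop_def Mop_def fourier_coeff_eq_0_if_Linf_zero)
  moreover have "(\<lambda>n. 0::complex) \<in> H2"
    by (simp add: H2_def)
  ultimately show "hyponormal_H2 (Vop \<phi>)"
    unfolding hyponormal_H2_def is_adjoint_H2_def
    by (intro exI[of _ "\<lambda>g n. 0"]) (simp add: H2_inner_def)
qed

end
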